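(* Let $p\ge2$ and $n,\ell,t$ be positive integers with $n>\ell$. For each $0\le r\le n-\ell$ let $\xi_r$ be a prime with $\max(t,r)<\xi_r\le2\max(t,r)$, and let $\mathbf{a}_r^*\in\{0,\dots,\xi_r-1\}^t$ maximize $|\mathcal{C}_{p,t,\ell}(n-\ell,r,\mathbf{a},\xi_r)|$ over $\mathbf{a}\in\{0,\dots,\xi_r-1\}^t$. Define $$\mathcal{C}^1=\bigl\{\phi^{-1}(\mathbf{y},\mathbf{z}):\ \mathbf{y}\in\mathbb{Z}_p^\ell,\ \mathbf{z}\in\mathcal{C}_{p,t,\ell}(n-\ell,r,\mathbf{a}_r^*,\xi_r)\text{ where }r=\mathrm{wt}_H(\mathbf{z})\bigr\}.$$ Then $$|\mathcal{C}^1|\ge p^\ell\sum_{r=0}^{n-\ell}\frac{\binom{n-\ell}{r}(p-1)^r}{(2\max(t,r))^t}.$$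
   Context: $\mathbb{Z}_p=\{0,1,\dots,p-1\}$ with arithmetic mod $p$. The bijection $\phi:\mathbb{Z}_p^n\to\mathbb{Z}_p^\ell\times\mathbb{Z}_p^{n-\ell}$ is $\phi(\mathbf{x})=(\mathbf{y},\mathbf{z})$ with $\mathbf{y}=(x_1,\dots,x_\ell)$ and $z_i=x_{i+\ell}-x_i$ for $1\le i\le n-\ell$. Any $\mathbf{z}\in\mathbb{Z}_p^m$ of Hamming weight $r$ is written uniquely as $\mathbf{z}=0^{b_1}u_10^{b_2}u_2\cdots u_r0^{b_{r+1}}$ with $u_i\ne0$, $b_i\ge0$. For a prime $\xi$ and $\mathbf{a}\in\{0,\dots,\xi-1\}^t$, $$\mathcal{C}_{p,t,\ell}(m,r,\mathbf{a},\xi)=\Bigl\{\mathbf{z}\in\mathbb{Z}_p^m:\ \mathrm{wt}_H(\mathbf{z})=r,\ \sum_{i=1}^{r+1}i^q\Bigl\lfloor\frac{b_i}{\ell}\Bigr\rfloor\equiv a_q\pmod{\xi}\ \forall\,1\le q\le t\Bigr\}.$$ *)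

theory Defs
  imports "HOL-Number_Theory.Number_Theory"
begin

definition Zp_vecs :: "nat \<Rightarrow> nat \<Rightarrow> nat list set" where
  "Zp_vecs p m = {x. length x = m \<and> set x \<subseteq> {..<p}}"

definition wtH :: "nat list \<Rightarrow> nat" where
  "wtH z = length (filter (\<lambda>x. x \<noteq> 0) z)"

definition phi :: "nat \<Rightarrow> nat \<Rightarrow> nat list \<Rightarrow> nat list \<times> nat list" where
  "phi p l x = (take l x, map (\<lambda>i. (x ! (i + l) + p - x ! i) mod p) [0..<length x - l])"

text \<open>Zero run lengths: z = 0^{b_1} u_1 0^{b_2} ... u_r 0^{b_{r+1}} gives [b_1,...,b_{r+1}].\<close>
fun zero_runs :: "nat list \<Rightarrow> nat list" where
  "zero_runs [] = [0]"
| "zero_runs (x # xs) =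
     (if x = 0 then (case zero_runs xs of [] \<Rightarrow> [1] | b # bs \<Rightarrow> Suc b # bs)
      else 0 # zero_runs xs)"

text \<open>The code C_{p,t,l}(m,r,a,xi); a = [a_1,...,a_t] is a list, a_q = a!(q-1).\<close>
definition codeC :: "nat \<Rightarrow> nat \<Rightarrow> nat \<Rightarrow> nat \<Rightarrow> nat \<Rightarrow> nat list \<Rightarrow> nat \<Rightarrow> nat list set" where
  "codeC p t l m r a \<xi> = {z \<in> Zp_vecs p m. wtH z = r \<and>
     (\<forall>q\<in>{1..t}. [(\<Sum>i<r+1. (i+1)^q * (zero_runs z ! i div l)) = a ! (q - 1)] (mod \<xi>))}"

definition param_vecs :: "nat \<Rightarrow> nat \<Rightarrow> nat list set" where
  "param_vecs t \<xi> = {a. length a = t \<and> set a \<subseteq> {..<\<xi>}}"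

end

theory Submission
  imports Defs
begin

text \<open>Each z of weight r lies in the code whose parameter vector a is its own list of
  weighted run sums mod \<xi>, so the \<xi>^t codes of weight r cover the Hamming sphere of size
  binom(m, r) (p-1)^r and the largest of them has at least a \<xi>^{-t} \<ge> (2 max(t, r))^{-t}
  fraction of it. Codes of different weights are disjoint, and \<phi> is a bijection
  Z_p^n \<rightarrow> Z_p^l \<times> Z_p^{n-l} since x_{i+l} = z_i + x_i, so the preimage of Z_p^l \<times> Z
  has p^l |Z| elements.\<close>

lemma finite_Zp_vecs: "finite (Zp_vecs p m)"
  unfolding Zp_vecs_def using finite_lists_length_eq[of "{..<p}" m] by (simp add: conj_commute)

lemma card_Zp_vecs: "card (Zp_vecs p m) = p ^ m"
  unfolding Zp_vecs_def using card_lists_length_eq[of "{..<p}" m] by (simp add: conj_commute)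

lemma finite_param_vecs: "finite (param_vecs t \<xi>)"
  unfolding param_vecs_def using finite_lists_length_eq[of "{..<\<xi>}" t] by (simp add: conj_commute)

lemma card_param_vecs: "card (param_vecs t \<xi>) = \<xi> ^ t"
  unfolding param_vecs_def using card_lists_length_eq[of "{..<\<xi>}" t] by (simp add: conj_commute)

lemma wtH_Cons: "wtH (u # z) = (if u = 0 then wtH z else Suc (wtH z))"
  unfolding wtH_def by simp

lemma wtH_le_length: "wtH z \<le> length z"
  unfolding wtH_def by simp

definition hamming_sphere :: "nat \<Rightarrow> nat \<Rightarrow> nat \<Rightarrow> nat list set" where
  "hamming_sphere p m r = {z \<in> Zp_vecs p m. wtH z = r}"

lemma finite_hamming_sphere: "finite (hamming_sphere p m r)"
  unfolding hamming_sphere_def using finite_Zp_vecs by simp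

lemma hamming_sphere_0:
  assumes "0 < p" shows "hamming_sphere p m 0 = {replicate m 0}"
  using assms
  by (auto simp: hamming_sphere_def Zp_vecs_def wtH_def filter_empty_conv intro: replicate_eqI)

lemma hamming_sphere_Suc_Suc:
  assumes "0 < p"
  shows "hamming_sphere p (Suc m) (Suc r) =
           Cons 0 ` hamming_sphere p m (Suc r) \<union> (\<lambda>(u, z). u # z) ` ({1..<p} \<times> hamming_sphere p m r)"
  using assms
  by (auto simp: hamming_sphere_def Zp_vecs_def wtH_Cons length_Suc_conv image_iff split: if_splits)

lemma card_hamming_sphere:
  assumes "0 < p" shows "card (hamming_sphere p m r) = (m choose r) * (p - 1) ^ r"
proof (induction m arbitrary: r)
  case 0
  have "hamming_sphere p 0 r = (if r = 0 then {[]} else {})"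
    by (auto simp: hamming_sphere_def Zp_vecs_def wtH_def)
  then show ?case by simp
next
  case (Suc m)
  show ?case
  proof (cases r)
    case 0
    then show ?thesis using assms by (simp add: hamming_sphere_0)
  next
    case (Suc k)
    have "card (hamming_sphere p (Suc m) (Suc k)) =
          card (hamming_sphere p m (Suc k)) + (p - 1) * card (hamming_sphere p m k)"
      unfolding hamming_sphere_Suc_Suc[OF assms]
      by (subst card_Un_disjoint)
         (auto simp: finite_hamming_sphere card_image inj_on_def card_cartesian_product)
    also have "\<dots> = ((m choose Suc k) + (m choose k)) * (p - 1) ^ Suc k"
      using Suc.IH by (simp add: distrib_left distrib_right mult_ac)
    finally show ?thesis using Suc by simp
  qed
qed

lemma codeC_subset_hamming_sphere: "codeC p t l m r a \<xi> \<subseteq> hamming_sphere p m r"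
  unfolding codeC_def hamming_sphere_def by auto

lemma finite_codeC: "finite (codeC p t l m r a \<xi>)"
  using codeC_subset_hamming_sphere finite_hamming_sphere by (rule finite_subset)

lemma hamming_sphere_subset_UN_codeC:
  assumes "0 < \<xi>"
  shows "hamming_sphere p m r \<subseteq> (\<Union>a\<in>param_vecs t \<xi>. codeC p t l m r a \<xi>)"
proof
  fix z assume z: "z \<in> hamming_sphere p m r"
  define S where "S q = (\<Sum>i<r+1. (i+1)^q * (zero_runs z ! i div l))" for q
  define a where "a = map (\<lambda>q. S q mod \<xi>) [1..<t+1]"
  have "a \<in> param_vecs t \<xi>"
    using assms by (auto simp: a_def param_vecs_def)
  moreover have "[S q = a ! (q - 1)] (mod \<xi>)" if "q \<in> {1..t}" for q
    using that by (auto simp: a_def cong_def simp del: upt_Suc)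
  then have "z \<in> codeC p t l m r a \<xi>"
    using z by (simp add: codeC_def hamming_sphere_def S_def)
  ultimately show "z \<in> (\<Union>a\<in>param_vecs t \<xi>. codeC p t l m r a \<xi>)" by blast
qed

lemma card_hamming_sphere_le_card_max_codeC:
  assumes "0 < \<xi>"
    and max: "\<forall>a\<in>param_vecs t \<xi>. card (codeC p t l m r a \<xi>) \<le> card (codeC p t l m r a' \<xi>)"
  shows "card (hamming_sphere p m r) \<le> \<xi> ^ t * card (codeC p t l m r a' \<xi>)"
proof -
  have "card (hamming_sphere p m r) \<le> card (\<Union>a\<in>param_vecs t \<xi>. codeC p t l m r a \<xi>)"
    using hamming_sphere_subset_UN_codeC[OF assms(1)]
    by (rule card_mono[rotated]) (simp add: finite_codeC finite_param_vecs)
  also have "\<dots> \<le> (\<Sum>a\<in>param_vecs t \<xi>. card (codeC p t l m r a \<xi>))"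
    using finite_param_vecs by (rule card_UN_le)
  also have "\<dots> \<le> (\<Sum>a\<in>param_vecs t \<xi>. card (codeC p t l m r a' \<xi>))"
    using max by (intro sum_mono) blast
  also have "\<dots> = \<xi> ^ t * card (codeC p t l m r a' \<xi>)"
    by (simp add: card_param_vecs)
  finally show ?thesis .
qed

lemma card_max_codeC_ge:
  assumes "0 < p" "0 < \<xi>" "\<xi> \<le> B"
    and "\<forall>a\<in>param_vecs t \<xi>. card (codeC p t l m r a \<xi>) \<le> card (codeC p t l m r a' \<xi>)"
  shows "real (m choose r) * real (p - 1) ^ r / real B ^ t \<le> real (card (codeC p t l m r a' \<xi>))"
proof -
  have "(m choose r) * (p - 1) ^ r \<le> \<xi> ^ t * card (codeC p t l m r a' \<xi>)"
    using card_hamming_sphere_le_card_max_codeC[OF assms(2,4)] card_hamming_sphere[OF assms(1)]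
    by simp
  also have "\<dots> \<le> B ^ t * card (codeC p t l m r a' \<xi>)"
    using power_mono[OF assms(3)] by (rule mult_right_mono) simp_all
  finally have "real ((m choose r) * (p - 1) ^ r) \<le> real (B ^ t * card (codeC p t l m r a' \<xi>))"
    by (simp only: of_nat_le_iff)
  then show ?thesis
    using assms(2,3) by (simp add: divide_le_eq mult.commute)
qed

lemma codeC_weight_adapted_eq_UN:
  "{z. z \<in> codeC p t l m (wtH z) (A (wtH z)) (X (wtH z))} = (\<Union>r\<le>m. codeC p t l m r (A r) (X r))"
  using wtH_le_length by (fastforce simp: codeC_def Zp_vecs_def)

lemma card_codeC_weight_adapted:
  "card {z. z \<in> codeC p t l m (wtH z) (A (wtH z)) (X (wtH z))} = (\<Sum>r\<le>m. card (codeC p t l m r (A r) (X r)))"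
  unfolding codeC_weight_adapted_eq_UN
  by (intro card_UN_disjoint ballI finite_codeC finite_atMost) (auto simp: codeC_def)

lemma phi_in_Zp_vecs:
  assumes "x \<in> Zp_vecs p n" "l \<le> n"
  shows "phi p l x \<in> Zp_vecs p l \<times> Zp_vecs p (n - l)"
proof -
  have "x ! i < p" if "i < n" for i
    using assms(1) that nth_mem by (fastforce simp: Zp_vecs_def)
  then have "(x ! (i + l) + p - x ! i) mod p < p" if "i < n - l" for i
    using that by fastforce
  then show ?thesis
    using assms by (auto simp: phi_def Zp_vecs_def dest: in_set_takeD)
qed

lemma phi_recovers_entry:
  assumes "x \<in> Zp_vecs p n" "i + l < n"
  shows "x ! (i + l) = (snd (phi p l x) ! i + x ! i) mod p"
proof -
  have entry: "x ! j < p" if "j < n" for j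
    using assms(1) that nth_mem by (fastforce simp: Zp_vecs_def)
  have "snd (phi p l x) ! i = (x ! (i + l) + p - x ! i) mod p"
    using assms by (simp add: phi_def Zp_vecs_def less_diff_conv)
  then have "(snd (phi p l x) ! i + x ! i) mod p = (x ! (i + l) + p) mod p"
    using entry[of i] assms(2) by (simp add: mod_add_left_eq)
  then show ?thesis
    using entry[OF assms(2)] by simp
qed

lemma inj_on_phi:
  assumes "0 < l" shows "inj_on (phi p l) (Zp_vecs p n)"
proof (rule inj_onI)
  fix x x' assume x: "x \<in> Zp_vecs p n" and x': "x' \<in> Zp_vecs p n" and eq: "phi p l x = phi p l x'"
  have "x ! j = x' ! j" if "j < n" for j
    using that
  proof (induction j rule: less_induct)
    case (less j)
    show ?case
    proof (cases "j < l")
      case True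
      then show ?thesis using eq by (metis fst_conv phi_def nth_take)
    next
      case False
      then obtain i where j: "j = i + l" by (metis le_add_diff_inverse2 not_less)
      then have "x ! i = x' ! i" using less assms by simp
      then show ?thesis
        using phi_recovers_entry[OF x] phi_recovers_entry[OF x'] eq less.prems j by simp
    qed
  qed
  then show "x = x'" using x x' by (simp add: Zp_vecs_def nth_equalityI)
qed

lemma bij_betw_phi:
  assumes "0 < l" "l \<le> n"
  shows "bij_betw (phi p l) (Zp_vecs p n) (Zp_vecs p l \<times> Zp_vecs p (n - l))"
proof -
  have "card (phi p l ` Zp_vecs p n) = card (Zp_vecs p l \<times> Zp_vecs p (n - l))"
    using assms by (simp add: card_image inj_on_phi card_Zp_vecs card_cartesian_product
                              flip: power_add)
  then have "phi p l ` Zp_vecs p n = Zp_vecs p l \<times> Zp_vecs p (n - l)"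
    using phi_in_Zp_vecs[OF _ assms(2)]
    by (intro card_subset_eq image_subsetI) (auto simp: finite_Zp_vecs)
  then show ?thesis using assms(1) by (simp add: bij_betw_def inj_on_phi)
qed

lemma card_phi_preimage_Times:
  assumes "0 < l" "l \<le> n" "Z \<subseteq> Zp_vecs p (n - l)"
  shows "card (the_inv_into (Zp_vecs p n) (phi p l) ` (Zp_vecs p l \<times> Z)) = p ^ l * card Z"
proof -
  have "inj_on (the_inv_into (Zp_vecs p n) (phi p l)) (Zp_vecs p l \<times> Z)"
    using bij_betw_imp_inj_on[OF bij_betw_the_inv_into[OF bij_betw_phi[OF assms(1,2)]]]
    by (rule inj_on_subset) (use assms(3) in auto)
  then show ?thesis
    by (simp only: card_image card_cartesian_product card_Zp_vecs)
qed

theorem lemma5: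
  fixes p n l t :: nat and \<xi> :: "nat \<Rightarrow> nat" and astar :: "nat \<Rightarrow> nat list"
  assumes "p \<ge> 2" and "n > l" and "l > 0" and "t > 0"
    and "\<forall>r\<le>n-l. prime (\<xi> r) \<and> max t r < \<xi> r \<and> \<xi> r \<le> 2 * max t r"
    and "\<forall>r\<le>n-l. astar r \<in> param_vecs t (\<xi> r) \<and>
           (\<forall>a\<in>param_vecs t (\<xi> r). card (codeC p t l (n-l) r a (\<xi> r))
                                   \<le> card (codeC p t l (n-l) r (astar r) (\<xi> r)))"
  shows "real (card ((\<lambda>(y, z). the_inv_into (Zp_vecs p n) (phi p l) (y, z)) `
             {(y, z). y \<in> Zp_vecs p l \<and> z \<in> codeC p t l (n-l) (wtH z) (astar (wtH z)) (\<xi> (wtH z))}))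
         \<ge> real p ^ l * (\<Sum>r=0..n-l. real ((n-l) choose r) * real (p-1) ^ r / real (2 * max t r) ^ t)"
proof -
  define m where "m = n - l"
  define Z where "Z = {z. z \<in> codeC p t l m (wtH z) (astar (wtH z)) (\<xi> (wtH z))}"
  have "Z \<subseteq> Zp_vecs p m"
    by (auto simp: Z_def codeC_def)
  then have "card (the_inv_into (Zp_vecs p n) (phi p l) ` (Zp_vecs p l \<times> Z))
      = p ^ l * (\<Sum>r\<le>m. card (codeC p t l m r (astar r) (\<xi> r)))"
    using assms(2,3) by (simp add: card_phi_preimage_Times m_def Z_def card_codeC_weight_adapted)
  moreover have "(\<Sum>r\<le>m. real (m choose r) * real (p - 1) ^ r / real (2 * max t r) ^ t)
      \<le> (\<Sum>r\<le>m. real (card (codeC p t l m r (astar r) (\<xi> r))))"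
  proof (intro sum_mono card_max_codeC_ge)
    fix r assume "r \<in> {..m}"
    then show "0 < \<xi> r" "\<xi> r \<le> 2 * max t r"
      and "\<forall>a\<in>param_vecs t (\<xi> r).
             card (codeC p t l m r a (\<xi> r)) \<le> card (codeC p t l m r (astar r) (\<xi> r))"
      using assms(5,6) by (auto simp: m_def)
  qed (use assms(1) in simp)
  moreover have "{(y, z). y \<in> Zp_vecs p l \<and> z \<in> codeC p t l (n-l) (wtH z) (astar (wtH z)) (\<xi> (wtH z))}
      = Zp_vecs p l \<times> Z"
    by (auto simp: Z_def m_def)
  ultimately show ?thesis
    by (simp add: case_prod_eta m_def atLeast0AtMost mult_left_mono)
qed

end
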